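(* In the GLM setting of the context, assume Conditions (C1)–(C2). Define, for $\lambda\ge0$, the asymptotic mean squared error $$\mathrm{aMSE}(\lambda)=d(\gamma_2)\,\mathrm{trace}\{\boldsymbol s^{-2}(\boldsymbol\beta_2;\lambda)\boldsymbol v_2(\boldsymbol\beta_2)\}+n_2\lambda^2n_1^{-2}\,\boldsymbol\Delta(\boldsymbol\beta_2)^\top\boldsymbol X_1^\top\boldsymbol s^{-2}(\boldsymbol\beta_2;\lambda)\boldsymbol X_1\boldsymbol\Delta(\boldsymbol\beta_2),$$ where $\boldsymbol s(\boldsymbol\beta;\lambda)=\boldsymbol v_2(\boldsymbol\beta)+\lambda\boldsymbol v_1(\boldsymbol\beta)$, so that $\mathrm{aMSE}(0)=d(\gamma_2)\mathrm{trace}\{\boldsymbol v_2^{-1}(\boldsymbol\beta_2)\}$ is the asymptotic MSE of the target MLE $\widehat{\boldsymbol\beta}_2$. Then: (i) for each $n_2$ there is $\lambda_0>0$ such that $\mathrm{aMSE}(\lambda)<\mathrm{aMSE}(0)$ for all $\lambda\in(0,\lambda_0)$; if $\boldsymbol X_1\boldsymbol\Delta(\boldsymbol\beta_2)=\boldsymbol 0$ this holds for all $\lambda>0$; (ii) if $\boldsymbol X_1\boldsymbol\Delta(\boldsymbol\beta_2)\neq\boldsymbol 0$, then, with $\boldsymbol v_1,\boldsymbol v_2,d(\gamma_2),\boldsymbol X_1,\boldsymbol\Delta(\boldsymbol\beta_2)$ held fixed, there is a constant $C$ such that for all sufficiently large $n_2$ every $\lambda>0$ with $\mathrm{aMSE}(\lambda)\le\mathrm{aMSE}(0)$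 satisfies $\lambda\le Cn_2^{-1/2}$; that is, the range of $\lambda>0$ on which the asymptotic MSE of $\widetilde{\boldsymbol\beta}_2(\lambda)$ is below that of $\widehat{\boldsymbol\beta}_2$ has upper limit $O(n_2^{-1/2})$.
   Context: GLM setting. Fix $p\ge1$, an open convex $\Theta\subseteq\mathbb{R}^p$, known $b,c,d$ with $b$ twice differentiable, $b''>0$, $h=b'$. Source (fixed): $n_1$, $\boldsymbol X_1=(\boldsymbol X_{11},\dots,\boldsymbol X_{n_11})\in\mathbb{R}^{p\times n_1}$, fixed $\widehat{\boldsymbol\beta}_1$. Target: deterministic $\boldsymbol X_{i2}$, $\boldsymbol X_2=(\boldsymbol X_{12},\dots,\boldsymbol X_{n_22})$, independent $y_{i2}$ with density $c(y;\gamma_2)\exp[d(\gamma_2)^{-1}\{y\boldsymbol X_{i2}^\top\boldsymbol\beta_2-b(\boldsymbol X_{i2}^\top\boldsymbol\beta_2)\}]$, true $\boldsymbol\beta_2\in\Theta$. Estimator $\widetilde{\boldsymbol\beta}_2(\lambda)=\arg\max_{\boldsymbol\beta}O(\boldsymbol\beta;\lambda)$ with $O(\boldsymbol\beta;\lambda)=n_2^{-1}\sum_{i=1}^{n_2}\{y_{i2}\boldsymbol X_{i2}^\top\boldsymbol\beta-b(\boldsymbol X_{i2}^\top\boldsymbol\beta)\}-\lambda n_1^{-1}\sum_{i=1}^{n_1}\{h(\boldsymbol X_{i1}^\top\widehat{\boldsymbol\beta}_1)(\boldsymbol X_{i1}^\top\widehat{\boldsymbol\beta}_1-\boldsymbol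 X_{i1}^\top\boldsymbol\beta)+b(\boldsymbol X_{i1}^\top\boldsymbol\beta)-b(\boldsymbol X_{i1}^\top\widehat{\boldsymbol\beta}_1)\}$; $\boldsymbol\beta_2^\star(\lambda)$ the unique maximizer of $\lim_{n_2\to\infty}\mathbb{E}O(\boldsymbol\beta;\lambda)$. Notation: $\boldsymbol A(\boldsymbol X_j^\top\boldsymbol\beta)=\mathrm{diag}\{b''(\boldsymbol X_{ij}^\top\boldsymbol\beta)\}_{i=1}^{n_j}$; $\boldsymbol\Delta(\boldsymbol\beta)=\{h(\boldsymbol X_{i1}^\top\boldsymbol\beta)-h(\boldsymbol X_{i1}^\top\widehat{\boldsymbol\beta}_1)\}_{i=1}^{n_1}$; $\boldsymbol v_1(\boldsymbol\beta)=n_1^{-1}\boldsymbol X_1\boldsymbol A(\boldsymbol X_1^\top\boldsymbol\beta)\boldsymbol X_1^\top$; $\boldsymbol v_2(\boldsymbol\beta)=\lim_{n_2\to\infty}n_2^{-1}\boldsymbol X_2\boldsymbol A(\boldsymbol X_2^\top\boldsymbol\beta)\boldsymbol X_2^\top$. Condition (C1): for each $\boldsymbol\beta$, $\lim_{n_2\to\infty}n_2^{-1}\sum_{i=1}^{n_2}\{h(\boldsymbol X_{i2}^\top\boldsymbol\beta_2)\boldsymbol X_{i2}^\top\boldsymbol\beta-b(\boldsymbol X_{i2}^\top\boldsymbol\beta)\}$ exists and is finite. Condition (C2): for every $\boldsymbol\beta$ between $\boldsymbol\beta_2$ and $\boldsymbol\beta_2^\star(\lambda)$ inclusive, $\boldsymbol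 v_1(\boldsymbol\beta)$ and $\boldsymbol v_2(\boldsymbol\beta)$ exist and are positive definite. *)

theory Defs
  imports "HOL-Analysis.Analysis"
begin

definition pos_def_mat :: "real^'p^'p \<Rightarrow> bool" where
  "pos_def_mat A \<longleftrightarrow> transpose A = A \<and> (\<forall>x. x \<noteq> 0 \<longrightarrow> x \<bullet> (A *v x) > 0)"

definition outer :: "real^'p \<Rightarrow> real^'p^'p" where
  "outer x = (\<chi> i j. x $ i * x $ j)"

text \<open>v1(beta) = n1^{-1} X1 A(X1^T beta) X1^T, source covariates X1 i, i < n1;
  b2 is the second derivative b''.\<close>
definition glm_v1 :: "(real \<Rightarrow> real) \<Rightarrow> nat \<Rightarrow> (nat \<Rightarrow> real^'p) \<Rightarrow> real^'p \<Rightarrow> real^'p^'p" where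
  "glm_v1 b2 n1 X1 \<beta> = (1 / real n1) *\<^sub>R (\<Sum>i<n1. b2 (X1 i \<bullet> \<beta>) *\<^sub>R outer (X1 i))"

definition glm_v2_seq :: "(real \<Rightarrow> real) \<Rightarrow> (nat \<Rightarrow> real^'p) \<Rightarrow> real^'p \<Rightarrow> nat \<Rightarrow> real^'p^'p" where
  "glm_v2_seq b2 X2 \<beta> n = (1 / real n) *\<^sub>R (\<Sum>i<n. b2 (X2 i \<bullet> \<beta>) *\<^sub>R outer (X2 i))"

text \<open>v2(beta) = lim_{n2 -> infinity} of the above (meaningful when the limit exists).\<close>
definition glm_v2 :: "(real \<Rightarrow> real) \<Rightarrow> (nat \<Rightarrow> real^'p) \<Rightarrow> real^'p \<Rightarrow> real^'p^'p" where
  "glm_v2 b2 X2 \<beta> = lim (glm_v2_seq b2 X2 \<beta>)"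

definition glm_X1Delta :: "(real \<Rightarrow> real) \<Rightarrow> nat \<Rightarrow> (nat \<Rightarrow> real^'p) \<Rightarrow> real^'p \<Rightarrow> real^'p \<Rightarrow> real^'p" where
  "glm_X1Delta h n1 X1 \<beta>hat1 \<beta> = (\<Sum>i<n1. (h (X1 i \<bullet> \<beta>) - h (X1 i \<bullet> \<beta>hat1)) *\<^sub>R X1 i)"

definition aMSE :: "real \<Rightarrow> real^'p^'p \<Rightarrow> real^'p^'p \<Rightarrow> real^'p \<Rightarrow> nat \<Rightarrow> nat \<Rightarrow> real \<Rightarrow> real" where
  "aMSE dg V1 V2 w n1 n2 lam =
     (let Si = matrix_inv (V2 + lam *\<^sub>R V1) in
      dg * trace (Si ** Si ** V2)
      + real n2 * lam\<^sup>2 / (real n1)\<^sup>2 * (w \<bullet> ((Si ** Si) *v w)))"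

end

theory Submission
  imports Defs
begin

text \<open>Comparing each column \<open>u\<close> of \<open>s\<^sup>-\<^sup>1\<close> with the corresponding column \<open>p\<close> of
  \<open>v\<^sub>2\<^sup>-\<^sup>1\<close> gives \<open>p\<^sup>T v\<^sub>2 p - u\<^sup>T v\<^sub>2 u \<ge> 2 \<lambda> u\<^sup>T v\<^sub>1 u\<close>, so the variance
  \<open>trace{s\<^sup>-\<^sup>2 v\<^sub>2}\<close> lies below \<open>trace{v\<^sub>2\<^sup>-\<^sup>1}\<close> by at least \<open>c \<lambda> / (1 + \<lambda>)\<^sup>2\<close>.
  The bias term \<open>n\<^sub>2 \<lambda>\<^sup>2 n\<^sub>1\<^sup>-\<^sup>2 |s\<^sup>-\<^sup>1 X\<^sub>1\<Delta>|\<^sup>2\<close> is \<open>O(n\<^sub>2 \<lambda>\<^sup>2)\<close>, hence beaten by the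
  variance gain for small \<open>\<lambda>\<close>; when \<open>X\<^sub>1\<Delta> \<noteq> 0\<close> it is also at least of order
  \<open>n\<^sub>2 \<lambda>\<^sup>2 / (1 + \<lambda>)\<^sup>2\<close>, and bounding it by \<open>trace{v\<^sub>2\<^sup>-\<^sup>1}\<close> forces \<open>\<lambda> = O(n\<^sub>2\<^sup>-\<^sup>1\<^sup>/\<^sup>2)\<close>.
  Of the GLM assumptions only the positive definiteness of \<open>v\<^sub>1(\<beta>\<^sub>2)\<close> and \<open>v\<^sub>2(\<beta>\<^sub>2)\<close>,
  \<open>d(\<gamma>\<^sub>2) > 0\<close> and \<open>n\<^sub>1 > 0\<close> are needed.\<close>

lemma pos_def_mat_inner_commute:
  fixes A :: "real^'p^'p"
  assumes "pos_def_mat A"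
  shows "x \<bullet> (A *v y) = (A *v x) \<bullet> y"
proof -
  have "x v* A = A *v x"
    using assms by (metis pos_def_mat_def transpose_matrix_vector)
  then show ?thesis by (metis dot_lmul_matrix)
qed

lemma pos_def_mat_invertible:
  fixes A :: "real^'p^'p"
  assumes "pos_def_mat A"
  shows "invertible A"
proof -
  have "\<forall>x. A *v x = 0 \<longrightarrow> x = 0"
    using assms unfolding pos_def_mat_def by (metis inner_zero_right less_irrefl)
  then show ?thesis
    using matrix_left_invertible_ker invertible_left_inverse by blast
qed

lemma invertible_matrix_inv:
  fixes A :: "real^'n^'n"
  assumes "invertible A"
  shows "A ** matrix_inv A = mat 1" "matrix_inv A ** A = mat 1"
  using someI_ex[OF assms[unfolded invertible_def]] unfolding matrix_inv_def by auto

lemma invertible_matrix_inv_cancel: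
  fixes A :: "real^'n^'n"
  assumes "invertible A"
  shows "A *v (matrix_inv A *v x) = x"
  by (simp add: assms invertible_matrix_inv matrix_vector_mul_assoc)

lemma pos_def_mat_coercive:
  fixes A :: "real^'p^'p"
  assumes "pos_def_mat A"
  obtains m where "m > 0" "\<And>x. m * (norm x)\<^sup>2 \<le> x \<bullet> (A *v x)"
proof -
  have cont: "continuous_on (sphere 0 1) (\<lambda>x. x \<bullet> (A *v x))"
    by (intro continuous_intros)
  obtain y where y: "y \<in> sphere 0 1"
    and ymin: "\<And>x. x \<in> sphere 0 1 \<Longrightarrow> y \<bullet> (A *v y) \<le> x \<bullet> (A *v x)"
    using continuous_attains_inf[OF compact_sphere _ cont] by fastforce
  have "y \<noteq> 0"
    using y by auto
  then have "y \<bullet> (A *v y) > 0"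
    using assms by (simp add: pos_def_mat_def)
  moreover have "y \<bullet> (A *v y) * (norm x)\<^sup>2 \<le> x \<bullet> (A *v x)" for x
  proof (cases "x = 0")
    case False
    let ?z = "(1 / norm x) *\<^sub>R x"
    have "y \<bullet> (A *v y) \<le> ?z \<bullet> (A *v ?z)"
      using False by (intro ymin) simp
    also have "\<dots> = (x \<bullet> (A *v x)) / (norm x)\<^sup>2"
      by (simp add: matrix_vector_mult_scaleR power2_eq_square)
    finally show ?thesis
      using False by (simp add: field_simps)
  qed simp
  ultimately show ?thesis using that by blast
qed

lemma pos_def_mat_inner_nonneg:
  fixes A :: "real^'p^'p"
  assumes "pos_def_mat A"
  shows "0 \<le> x \<bullet> (A *v x)"
  using assms unfolding pos_def_mat_def by (cases "x = 0") (auto intro: less_imp_le)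

lemma norm_le_norm_matrix_vector_mult_of_coercive:
  fixes A :: "real^'n^'n"
  assumes "\<And>x. m * (norm x)\<^sup>2 \<le> x \<bullet> (A *v x)"
  shows "m * norm x \<le> norm (A *v x)"
proof (cases "x = 0")
  case False
  have "m * norm x * norm x \<le> norm x * norm (A *v x)"
    using assms[of x] Cauchy_Schwarz_ineq2[of x "A *v x"] by (simp add: power2_eq_square)
  then show ?thesis
    using False by (simp add: mult.commute)
qed simp

lemma pos_def_mat_add_scaleR:
  fixes V1 V2 :: "real^'p^'p"
  assumes "pos_def_mat V1" "pos_def_mat V2" "lam \<ge> 0"
  shows "pos_def_mat (V2 + lam *\<^sub>R V1)"
proof -
  have "transpose (V2 + lam *\<^sub>R V1) = V2 + lam *\<^sub>R V1"
    using assms by (simp add: pos_def_mat_def transpose_scalar transpose_def vec_eq_iff)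
  moreover have "x \<bullet> ((V2 + lam *\<^sub>R V1) *v x) > 0" if "x \<noteq> 0" for x
  proof -
    have "x \<bullet> (V2 *v x) > 0" "x \<bullet> (V1 *v x) > 0"
      using assms that by (auto simp: pos_def_mat_def)
    then show ?thesis
      using assms(3)
      by (simp add: matrix_vector_mult_add_rdistrib inner_add_right
          scaleR_matrix_vector_assoc[symmetric] add_pos_nonneg)
  qed
  ultimately show ?thesis
    by (simp add: pos_def_mat_def)
qed

lemma trace_eq_sum_inner_axis:
  fixes M :: "real^'n^'n"
  shows "trace M = (\<Sum>i\<in>UNIV. axis i 1 \<bullet> (M *v axis i 1))"
proof -
  have "axis i 1 \<bullet> (M *v axis i 1) = M$i$i" for i
    unfolding inner_axis'
    by (simp add: matrix_vector_mult_def axis_def if_distrib[of "\<lambda>t. _ * t"] cong: if_cong)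
  then show ?thesis
    unfolding trace_def by simp
qed

lemma trace_matrix_inv_sandwich:
  fixes S V :: "real^'p^'p"
  assumes "pos_def_mat S"
  shows "trace (matrix_inv S ** matrix_inv S ** V)
    = (\<Sum>i\<in>UNIV. (matrix_inv S *v axis i 1) \<bullet> (V *v (matrix_inv S *v axis i 1)))"
proof -
  let ?T = "matrix_inv S"
  have cancel: "S *v (?T *v x) = x" for x
    using assms by (simp add: pos_def_mat_invertible invertible_matrix_inv_cancel)
  have "axis i 1 \<bullet> ((?T ** V ** ?T) *v axis i 1) = (?T *v axis i 1) \<bullet> (V *v (?T *v axis i 1))" for i
  proof -
    let ?u = "?T *v axis i 1"
    have "axis i 1 \<bullet> ((?T ** V ** ?T) *v axis i 1) = (S *v ?u) \<bullet> (?T *v (V *v ?u))"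
      by (simp add: cancel matrix_vector_mul_assoc[symmetric])
    also have "\<dots> = ?u \<bullet> (S *v (?T *v (V *v ?u)))"
      using pos_def_mat_inner_commute[OF assms] by simp
    finally show ?thesis
      by (simp add: cancel)
  qed
  moreover have "trace (?T ** ?T ** V) = trace (?T ** V ** ?T)"
    by (metis matrix_mul_assoc trace_mul_sym)
  ultimately show ?thesis
    by (simp add: trace_eq_sum_inner_axis)
qed

lemma inner_matrix_inv_square:
  fixes S :: "real^'p^'p"
  assumes "pos_def_mat S"
  shows "w \<bullet> ((matrix_inv S ** matrix_inv S) *v w) = (norm (matrix_inv S *v w))\<^sup>2"
proof -
  let ?u = "matrix_inv S *v w"
  have cancel: "S *v (matrix_inv S *v x) = x" for x
    using assms by (simp add: pos_def_mat_invertible invertible_matrix_inv_cancel)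
  have "w \<bullet> ((matrix_inv S ** matrix_inv S) *v w) = (S *v ?u) \<bullet> (matrix_inv S *v ?u)"
    by (simp add: cancel matrix_vector_mul_assoc[symmetric])
  also have "\<dots> = ?u \<bullet> (S *v (matrix_inv S *v ?u))"
    using pos_def_mat_inner_commute[OF assms] by simp
  also have "\<dots> = ?u \<bullet> ?u"
    by (simp only: cancel)
  finally show ?thesis
    by (simp add: power2_norm_eq_inner)
qed

lemma quadratic_form_gap:
  fixes U V :: "real^'p^'p"
  assumes "pos_def_mat V" "V *v p = V *v u + lam *\<^sub>R (U *v u)"
  shows "2 * lam * (u \<bullet> (U *v u)) \<le> p \<bullet> (V *v p) - u \<bullet> (V *v u)"
proof -
  have "0 \<le> (p - u) \<bullet> (V *v (p - u))"
    using assms(1) by (rule pos_def_mat_inner_nonneg)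
  also have "\<dots> = p \<bullet> (V *v p) - 2 * (u \<bullet> (V *v p)) + u \<bullet> (V *v u)"
    using pos_def_mat_inner_commute[OF assms(1), of p u]
    by (simp add: matrix_vector_mult_diff_distrib inner_diff_left inner_diff_right inner_commute)
  also have "u \<bullet> (V *v p) = u \<bullet> (V *v u) + lam * (u \<bullet> (U *v u))"
    by (simp add: assms(2) inner_add_right)
  finally show ?thesis
    by simp
qed

lemma norm_matrix_pencil_le:
  fixes V1 V2 :: "real^'p^'p"
  obtains K where "K > 0" "\<And>lam x. lam \<ge> 0 \<Longrightarrow> norm ((V2 + lam *\<^sub>R V1) *v x) \<le> K * (1 + lam) * norm x"
proof -
  obtain K1 where K1: "K1 > 0" "\<And>x. norm (V1 *v x) \<le> norm x * K1"
    using bounded_linear.pos_bounded[OF matrix_vector_mul_bounded_linear] by blast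
  obtain K2 where K2: "K2 > 0" "\<And>x. norm (V2 *v x) \<le> norm x * K2"
    using bounded_linear.pos_bounded[OF matrix_vector_mul_bounded_linear] by blast
  have "norm ((V2 + lam *\<^sub>R V1) *v x) \<le> (K1 + K2) * (1 + lam) * norm x" if "lam \<ge> 0" for lam x
  proof -
    have "norm ((V2 + lam *\<^sub>R V1) *v x) \<le> norm (V2 *v x) + lam * norm (V1 *v x)"
      using norm_triangle_ineq[of "V2 *v x" "lam *\<^sub>R (V1 *v x)"] that
      by (simp add: matrix_vector_mult_add_rdistrib scaleR_matrix_vector_assoc[symmetric])
    also have "\<dots> \<le> norm x * K2 + lam * (norm x * K1)"
      using K1 K2 that by (intro add_mono mult_left_mono) auto
    also have "\<dots> \<le> (K1 + K2) * (1 + lam) * norm x"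
      using K1 K2 that by (simp add: algebra_simps)
    finally show ?thesis .
  qed
  then show ?thesis
    using that K1 K2 by (metis add_pos_pos)
qed

lemma invertible_matrix_inv_square_mul:
  fixes V :: "real^'n^'n"
  assumes "invertible V"
  shows "matrix_inv V ** matrix_inv V ** V = matrix_inv V"
proof -
  have "matrix_inv V ** matrix_inv V ** V = matrix_inv V ** (matrix_inv V ** V)"
    by (simp add: matrix_mul_assoc)
  also have "\<dots> = matrix_inv V"
    by (simp add: assms invertible_matrix_inv(2))
  finally show ?thesis .
qed

lemma trace_matrix_inv_eq_sum:
  fixes V :: "real^'p^'p"
  assumes "pos_def_mat V"
  shows "trace (matrix_inv V)
    = (\<Sum>i\<in>UNIV. (matrix_inv V *v axis i 1) \<bullet> (V *v (matrix_inv V *v axis i 1)))"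
  using trace_matrix_inv_sandwich[OF assms, of V]
  by (simp add: assms pos_def_mat_invertible invertible_matrix_inv_square_mul)

definition amse_variance :: "real^'p^'p \<Rightarrow> real^'p^'p \<Rightarrow> real \<Rightarrow> real" where
  "amse_variance V1 V2 lam =
     trace (matrix_inv (V2 + lam *\<^sub>R V1) ** matrix_inv (V2 + lam *\<^sub>R V1) ** V2)"

definition amse_bias :: "real^'p^'p \<Rightarrow> real^'p^'p \<Rightarrow> real^'p \<Rightarrow> real \<Rightarrow> real" where
  "amse_bias V1 V2 w lam =
     w \<bullet> ((matrix_inv (V2 + lam *\<^sub>R V1) ** matrix_inv (V2 + lam *\<^sub>R V1)) *v w)"

lemma aMSE_eq:
  "aMSE dg V1 V2 w n1 n2 lam
     = dg * amse_variance V1 V2 lam + real n2 * lam\<^sup>2 / (real n1)\<^sup>2 * amse_bias V1 V2 w lam"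
  by (simp add: aMSE_def amse_variance_def amse_bias_def Let_def)

lemma amse_variance_zero:
  assumes "pos_def_mat V2"
  shows "amse_variance V1 V2 0 = trace (matrix_inv V2)"
  by (simp add: amse_variance_def assms pos_def_mat_invertible invertible_matrix_inv_square_mul)

lemma amse_variance_nonneg:
  assumes "pos_def_mat V1" "pos_def_mat V2" "lam \<ge> 0"
  shows "amse_variance V1 V2 lam \<ge> 0"
  using trace_matrix_inv_sandwich[OF pos_def_mat_add_scaleR[OF assms]]
    pos_def_mat_inner_nonneg[OF assms(2)]
  by (simp add: amse_variance_def sum_nonneg)

lemma amse_variance_gap_ge_sum:
  fixes V1 V2 :: "real^'p^'p"
  assumes pd1: "pos_def_mat V1" and pd2: "pos_def_mat V2" and lam: "lam \<ge> 0"
  defines "u i \<equiv> matrix_inv (V2 + lam *\<^sub>R V1) *v axis i 1"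
  shows "2 * lam * (\<Sum>i\<in>UNIV. u i \<bullet> (V1 *v u i)) \<le> trace (matrix_inv V2) - amse_variance V1 V2 lam"
proof -
  define p where "p i = matrix_inv V2 *v axis i 1" for i
  have "(V2 + lam *\<^sub>R V1) *v u i = axis i 1" "V2 *v p i = axis i 1" for i
    unfolding u_def p_def using pos_def_mat_add_scaleR[OF pd1 pd2 lam] pd2
    by (simp_all add: pos_def_mat_invertible invertible_matrix_inv_cancel)
  then have "2 * lam * (u i \<bullet> (V1 *v u i)) \<le> p i \<bullet> (V2 *v p i) - u i \<bullet> (V2 *v u i)" for i
    by (intro quadratic_form_gap[OF pd2])
      (simp add: matrix_vector_mult_add_rdistrib scaleR_matrix_vector_assoc)
  then have "2 * lam * (\<Sum>i\<in>UNIV. u i \<bullet> (V1 *v u i))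
      \<le> (\<Sum>i\<in>UNIV. p i \<bullet> (V2 *v p i) - u i \<bullet> (V2 *v u i))"
    unfolding sum_distrib_left by (rule sum_mono)
  also have "\<dots> = trace (matrix_inv V2) - amse_variance V1 V2 lam"
    using trace_matrix_inv_sandwich[OF pos_def_mat_add_scaleR[OF pd1 pd2 lam], of V2]
      trace_matrix_inv_eq_sum[OF pd2]
    by (simp add: amse_variance_def u_def p_def sum_subtractf)
  finally show ?thesis .
qed

lemma amse_variance_gap:
  fixes V1 V2 :: "real^'p^'p"
  assumes pd1: "pos_def_mat V1" and pd2: "pos_def_mat V2"
  obtains c where "c > 0"
    "\<And>lam. lam \<ge> 0 \<Longrightarrow> c * lam / (1 + lam)\<^sup>2 \<le> trace (matrix_inv V2) - amse_variance V1 V2 lam"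
proof -
  obtain m where m: "m > 0" "\<And>x. m * (norm x)\<^sup>2 \<le> x \<bullet> (V1 *v x)"
    using pos_def_mat_coercive[OF pd1] by blast
  obtain K where K: "K > 0" "\<And>lam x. lam \<ge> 0 \<Longrightarrow> norm ((V2 + lam *\<^sub>R V1) *v x) \<le> K * (1 + lam) * norm x"
    using norm_matrix_pencil_le[of V2 V1] by metis
  have "2 * m / K\<^sup>2 * lam / (1 + lam)\<^sup>2 \<le> trace (matrix_inv V2) - amse_variance V1 V2 lam"
    if lam: "lam \<ge> 0" for lam
  proof -
    define u where "u i = matrix_inv (V2 + lam *\<^sub>R V1) *v axis i 1" for i
    obtain i0 :: 'p where True by blast
    have k: "K * (1 + lam) > 0"
      using K(1) lam by simp
    have "1 \<le> K * (1 + lam) * norm (u i0)"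
      using K(2)[OF lam, of "u i0"] pos_def_mat_add_scaleR[OF pd1 pd2 lam] unfolding u_def
      by (simp add: pos_def_mat_invertible invertible_matrix_inv_cancel)
    then have "1 / (K * (1 + lam)) \<le> norm (u i0)"
      using k by (simp add: divide_le_eq mult.commute)
    then have "(1 / (K * (1 + lam)))\<^sup>2 \<le> (norm (u i0))\<^sup>2"
      using k by (intro power_mono) auto
    then have "2 * lam * m * (1 / (K * (1 + lam)))\<^sup>2 \<le> 2 * lam * m * (norm (u i0))\<^sup>2"
      using lam m(1) by (intro mult_left_mono) auto
    then have "2 * m / K\<^sup>2 * lam / (1 + lam)\<^sup>2 \<le> 2 * lam * (m * (norm (u i0))\<^sup>2)"
      by (simp add: power_divide power_mult_distrib mult_ac)
    also have "\<dots> \<le> 2 * lam * (u i0 \<bullet> (V1 *v u i0))"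
      using m(2) lam by (simp add: mult_left_mono)
    also have "\<dots> \<le> 2 * lam * (\<Sum>i\<in>UNIV. u i \<bullet> (V1 *v u i))"
      using pos_def_mat_inner_nonneg[OF pd1] lam by (intro mult_left_mono member_le_sum) auto
    also have "\<dots> \<le> trace (matrix_inv V2) - amse_variance V1 V2 lam"
      unfolding u_def by (rule amse_variance_gap_ge_sum[OF pd1 pd2 lam])
    finally show ?thesis .
  qed
  moreover have "2 * m / K\<^sup>2 > 0"
    using m K by simp
  ultimately show ?thesis
    using that by blast
qed

lemma amse_bias_le:
  fixes V1 V2 :: "real^'p^'p"
  assumes pd1: "pos_def_mat V1" and pd2: "pos_def_mat V2"
  obtains B where "\<And>lam. lam \<ge> 0 \<Longrightarrow> amse_bias V1 V2 w lam \<le> B"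
proof -
  obtain m where m: "m > 0" "\<And>x. m * (norm x)\<^sup>2 \<le> x \<bullet> (V2 *v x)"
    using pos_def_mat_coercive[OF pd2] by blast
  have "amse_bias V1 V2 w lam \<le> (norm w / m)\<^sup>2" if lam: "lam \<ge> 0" for lam
  proof -
    define S where "S = V2 + lam *\<^sub>R V1"
    have pdS: "pos_def_mat S"
      unfolding S_def using pos_def_mat_add_scaleR[OF pd1 pd2 lam] .
    have "m * (norm x)\<^sup>2 \<le> x \<bullet> (S *v x)" for x
      using m(2)[of x] pos_def_mat_inner_nonneg[OF pd1, of x] lam unfolding S_def
      by (simp add: matrix_vector_mult_add_rdistrib inner_add_right
          scaleR_matrix_vector_assoc[symmetric] add_increasing2)
    then have "m * norm (matrix_inv S *v w) \<le> norm w"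
      using norm_le_norm_matrix_vector_mult_of_coercive pdS
      by (metis pos_def_mat_invertible invertible_matrix_inv_cancel)
    then have "norm (matrix_inv S *v w) \<le> norm w / m"
      using m(1) by (simp add: field_simps)
    then show ?thesis
      using inner_matrix_inv_square[OF pdS, of w] unfolding amse_bias_def S_def
      by (simp add: power_mono)
  qed
  then show ?thesis
    using that by blast
qed

lemma amse_bias_ge:
  fixes V1 V2 :: "real^'p^'p"
  assumes pd1: "pos_def_mat V1" and pd2: "pos_def_mat V2"
  obtains c where "c > 0"
    "\<And>lam. lam \<ge> 0 \<Longrightarrow> c * (norm w)\<^sup>2 \<le> (1 + lam)\<^sup>2 * amse_bias V1 V2 w lam"
proof -
  obtain K where K: "K > 0" "\<And>lam x. lam \<ge> 0 \<Longrightarrow> norm ((V2 + lam *\<^sub>R V1) *v x) \<le> K * (1 + lam) * norm x"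
    using norm_matrix_pencil_le[of V2 V1] by metis
  have "1 / K\<^sup>2 * (norm w)\<^sup>2 \<le> (1 + lam)\<^sup>2 * amse_bias V1 V2 w lam" if lam: "lam \<ge> 0" for lam
  proof -
    define S where "S = V2 + lam *\<^sub>R V1"
    have pdS: "pos_def_mat S"
      unfolding S_def using pos_def_mat_add_scaleR[OF pd1 pd2 lam] .
    have "norm w \<le> K * (1 + lam) * norm (matrix_inv S *v w)"
      using K(2)[OF lam, of "matrix_inv S *v w"] pdS unfolding S_def
      by (simp add: pos_def_mat_invertible invertible_matrix_inv_cancel)
    then have "(norm w)\<^sup>2 \<le> K\<^sup>2 * ((1 + lam)\<^sup>2 * (norm (matrix_inv S *v w))\<^sup>2)"
      by (metis power_mono norm_ge_zero power_mult_distrib mult.assoc)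
    then show ?thesis
      using K(1) inner_matrix_inv_square[OF pdS, of w] unfolding amse_bias_def S_def
      by (simp add: field_simps)
  qed
  moreover have "1 / K\<^sup>2 > 0"
    using K(1) by simp
  ultimately show ?thesis
    using that by blast
qed

lemma aMSE_less_aMSE_zero_near_zero:
  fixes V1 V2 :: "real^'p^'p"
  assumes pd1: "pos_def_mat V1" and pd2: "pos_def_mat V2" and dg: "dg > 0"
  obtains lam0 where "lam0 > 0"
    "\<And>lam. 0 < lam \<Longrightarrow> lam < lam0 \<Longrightarrow> aMSE dg V1 V2 w n1 n2 lam < aMSE dg V1 V2 w n1 n2 0"
proof -
  obtain c where c: "c > 0"
    "\<And>lam. lam \<ge> 0 \<Longrightarrow> c * lam / (1 + lam)\<^sup>2 \<le> trace (matrix_inv V2) - amse_variance V1 V2 lam"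
    using amse_variance_gap[OF pd1 pd2] by blast
  obtain B where B: "\<And>lam. lam \<ge> 0 \<Longrightarrow> amse_bias V1 V2 w lam \<le> B"
    using amse_bias_le[OF pd1 pd2] by blast
  define a where "a = dg * c / 4"
  define E where "E = real n2 * B / (real n1)\<^sup>2"
  define lam0 where "lam0 = min 1 (a / (\<bar>E\<bar> + 1))"
  have "aMSE dg V1 V2 w n1 n2 lam < aMSE dg V1 V2 w n1 n2 0" if lam: "0 < lam" "lam < lam0" for lam
  proof -
    have "lam * \<bar>E\<bar> < a"
      using lam dg c(1) unfolding lam0_def a_def by (simp add: field_simps)
    moreover have "lam * E \<le> lam * \<bar>E\<bar>"
      using lam by (intro mult_left_mono) auto
    ultimately have "lam * E < a"
      by linarith
    have "real n2 * lam\<^sup>2 / (real n1)\<^sup>2 * amse_bias V1 V2 w lam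
        \<le> real n2 * lam\<^sup>2 / (real n1)\<^sup>2 * B"
      using B[of lam] lam by (intro mult_left_mono) auto
    also have "\<dots> = lam * (lam * E)"
      by (simp add: E_def power2_eq_square)
    also have "\<dots> < lam * a"
      using \<open>lam * E < a\<close> lam by simp
    also have "\<dots> \<le> dg * (c * lam / (1 + lam)\<^sup>2)"
    proof -
      have "(1 + lam)\<^sup>2 \<le> 2\<^sup>2"
        using lam unfolding lam0_def by (intro power_mono) auto
      then show ?thesis
        using lam dg c(1) unfolding a_def by (simp add: field_simps)
    qed
    also have "\<dots> \<le> dg * (trace (matrix_inv V2) - amse_variance V1 V2 lam)"
      using c(2)[of lam] lam dg by (intro mult_left_mono) auto
    finally show ?thesis
      by (simp add: aMSE_eq amse_variance_zero[OF pd2] algebra_simps)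
  qed
  moreover have "lam0 > 0"
    using dg c(1) unfolding lam0_def a_def by simp
  ultimately show ?thesis
    using that by blast
qed

lemma aMSE_less_aMSE_zero_unbiased:
  fixes V1 V2 :: "real^'p^'p"
  assumes pd1: "pos_def_mat V1" and pd2: "pos_def_mat V2" and dg: "dg > 0" and lam: "lam > 0"
  shows "aMSE dg V1 V2 0 n1 n2 lam < aMSE dg V1 V2 0 n1 n2 0"
proof -
  obtain c where c: "c > 0"
    "\<And>lam. lam \<ge> 0 \<Longrightarrow> c * lam / (1 + lam)\<^sup>2 \<le> trace (matrix_inv V2) - amse_variance V1 V2 lam"
    using amse_variance_gap[OF pd1 pd2] by blast
  have "0 < c * lam / (1 + lam)\<^sup>2"
    using c(1) lam by simp
  then have "amse_variance V1 V2 lam < trace (matrix_inv V2)"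
    using c(2)[of lam] lam by simp
  then show ?thesis
    using dg by (simp add: aMSE_eq amse_bias_def amse_variance_zero[OF pd2])
qed

lemma aMSE_le_aMSE_zero_imp_bias_le:
  fixes V1 V2 :: "real^'p^'p"
  assumes pd1: "pos_def_mat V1" and pd2: "pos_def_mat V2" and dg: "dg > 0" and lam: "lam \<ge> 0"
    and le: "aMSE dg V1 V2 w n1 n2 lam \<le> aMSE dg V1 V2 w n1 n2 0"
  shows "real n2 * lam\<^sup>2 / (real n1)\<^sup>2 * amse_bias V1 V2 w lam \<le> dg * trace (matrix_inv V2)"
proof -
  have "real n2 * lam\<^sup>2 / (real n1)\<^sup>2 * amse_bias V1 V2 w lam
      \<le> dg * (trace (matrix_inv V2) - amse_variance V1 V2 lam)"
    using le by (simp add: aMSE_eq amse_variance_zero[OF pd2] algebra_simps)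
  also have "\<dots> \<le> dg * trace (matrix_inv V2)"
    using amse_variance_nonneg[OF pd1 pd2 lam] dg by (simp add: algebra_simps)
  finally show ?thesis .
qed

lemma le_of_square_le_square_one_plus:
  fixes a D lam :: real
  assumes lam: "0 \<le> lam" and a: "0 < a"
    and sq: "a * lam\<^sup>2 \<le> D * (1 + lam)\<^sup>2" and large: "4 * D \<le> a"
  shows "lam \<le> 2 * sqrt D / sqrt a"
proof -
  have "0 \<le> D * (1 + lam)\<^sup>2"
    using a by (intro order_trans[OF _ sq]) simp
  then have D: "0 \<le> D"
    using lam by (simp add: zero_le_mult_iff)
  have "sqrt (a * lam\<^sup>2) \<le> sqrt (D * (1 + lam)\<^sup>2)"
    using sq by (rule real_sqrt_le_mono)
  then have "sqrt a * lam \<le> sqrt D * (1 + lam)"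
    using lam by (simp add: real_sqrt_mult)
  moreover have "2 * sqrt D \<le> sqrt a"
    using large D by (metis real_sqrt_le_mono real_sqrt_four real_sqrt_mult)
  moreover have "2 * sqrt D * lam \<le> sqrt a * lam"
    using calculation(2) lam by (rule mult_right_mono)
  ultimately have "sqrt a * lam \<le> 2 * sqrt D"
    by (simp add: algebra_simps)
  then show ?thesis
    using a by (simp add: field_simps)
qed

lemma aMSE_le_aMSE_zero_imp_lambda_le:
  fixes V1 V2 :: "real^'p^'p"
  assumes pd1: "pos_def_mat V1" and pd2: "pos_def_mat V2" and dg: "dg > 0"
    and n1: "n1 > 0" and w: "w \<noteq> 0"
  obtains C N where "\<And>n2 lam. N \<le> n2 \<Longrightarrow> 0 < lam \<Longrightarrow>
      aMSE dg V1 V2 w n1 n2 lam \<le> aMSE dg V1 V2 w n1 n2 0 \<Longrightarrow> lam \<le> C / sqrt (real n2)"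
proof -
  obtain c where c: "c > 0"
    "\<And>lam. lam \<ge> 0 \<Longrightarrow> c * (norm w)\<^sup>2 \<le> (1 + lam)\<^sup>2 * amse_bias V1 V2 w lam"
    using amse_bias_ge[OF pd1 pd2] by blast
  define a where "a = c * (norm w)\<^sup>2 / (real n1)\<^sup>2"
  define D where "D = dg * trace (matrix_inv V2)"
  have a: "a > 0"
    using c(1) w n1 unfolding a_def by simp
  have "lam \<le> 2 * sqrt D / sqrt a / sqrt (real n2)"
    if n2: "nat \<lceil>4 * D / a\<rceil> + 1 \<le> n2" and lam: "0 < lam"
      and le: "aMSE dg V1 V2 w n1 n2 lam \<le> aMSE dg V1 V2 w n1 n2 0" for n2 lam
  proof -
    have n2_pos: "real n2 > 0"
      using n2 by simp
    have bias_le: "real n2 * lam\<^sup>2 / (real n1)\<^sup>2 * amse_bias V1 V2 w lam \<le> D"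
      unfolding D_def using aMSE_le_aMSE_zero_imp_bias_le[OF pd1 pd2 dg _ le] lam by simp
    have "(real n2 * a) * lam\<^sup>2 = real n2 * lam\<^sup>2 / (real n1)\<^sup>2 * (c * (norm w)\<^sup>2)"
      unfolding a_def by (simp add: field_simps)
    also have "\<dots> \<le> real n2 * lam\<^sup>2 / (real n1)\<^sup>2 * ((1 + lam)\<^sup>2 * amse_bias V1 V2 w lam)"
      using c(2)[of lam] lam by (intro mult_left_mono) auto
    also have "\<dots> \<le> D * (1 + lam)\<^sup>2"
      using bias_le mult_right_mono[OF bias_le, of "(1 + lam)\<^sup>2"] by (simp add: algebra_simps)
    finally have "(real n2 * a) * lam\<^sup>2 \<le> D * (1 + lam)\<^sup>2" .
    moreover have "4 * D \<le> real n2 * a"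
    proof -
      have "4 * D / a \<le> real n2"
        using real_nat_ceiling_ge[of "4 * D / a"] n2 by linarith
      then show ?thesis
        using a by (simp add: divide_le_eq)
    qed
    ultimately have "lam \<le> 2 * sqrt D / sqrt (real n2 * a)"
      using a n2_pos lam by (intro le_of_square_le_square_one_plus) auto
    then show ?thesis
      by (simp add: real_sqrt_mult field_simps)
  qed
  then show ?thesis
    using that by blast
qed

theorem theorem2:
  fixes b h b2 :: "real \<Rightarrow> real"
    and d :: "'g \<Rightarrow> real" and \<gamma>2 :: 'g
    and \<Theta> :: "(real^'p) set"
    and n1 :: nat and X1 :: "nat \<Rightarrow> real^'p" and \<beta>hat1 :: "real^'p"
    and X2 :: "nat \<Rightarrow> real^'p" and \<beta>2 :: "real^'p"
  assumes \<Theta>: "open \<Theta>" "convex \<Theta>" "\<beta>2 \<in> \<Theta>"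
    and b_deriv: "\<And>x. (b has_real_derivative h x) (at x)"
    and h_deriv: "\<And>x. (h has_real_derivative b2 x) (at x)"
    and b2_pos: "\<And>x. b2 x > 0"
    and d_pos: "d \<gamma>2 > 0"
    and n1_pos: "n1 > 0"
    and C1: "\<And>\<beta>. convergent (\<lambda>n. (1 / real n) *
               (\<Sum>i<n. h (X2 i \<bullet> \<beta>2) * (X2 i \<bullet> \<beta>) - b (X2 i \<bullet> \<beta>)))"
    and C2_v1: "pos_def_mat (glm_v1 b2 n1 X1 \<beta>2)"
    and C2_v2_exists: "convergent (glm_v2_seq b2 X2 \<beta>2)"
    and C2_v2: "pos_def_mat (glm_v2 b2 X2 \<beta>2)"
  shows
    "(\<forall>n2. \<exists>lam0>0. \<forall>lam. 0 < lam \<and> lam < lam0 \<longrightarrow>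
        aMSE (d \<gamma>2) (glm_v1 b2 n1 X1 \<beta>2) (glm_v2 b2 X2 \<beta>2) (glm_X1Delta h n1 X1 \<beta>hat1 \<beta>2) n1 n2 lam
      < aMSE (d \<gamma>2) (glm_v1 b2 n1 X1 \<beta>2) (glm_v2 b2 X2 \<beta>2) (glm_X1Delta h n1 X1 \<beta>hat1 \<beta>2) n1 n2 0)
   \<and> (glm_X1Delta h n1 X1 \<beta>hat1 \<beta>2 = 0 \<longrightarrow> (\<forall>n2. \<forall>lam>0.
        aMSE (d \<gamma>2) (glm_v1 b2 n1 X1 \<beta>2) (glm_v2 b2 X2 \<beta>2) (glm_X1Delta h n1 X1 \<beta>hat1 \<beta>2) n1 n2 lam
      < aMSE (d \<gamma>2) (glm_v1 b2 n1 X1 \<beta>2) (glm_v2 b2 X2 \<beta>2) (glm_X1Delta h n1 X1 \<beta>hat1 \<beta>2) n1 n2 0))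
   \<and> (glm_X1Delta h n1 X1 \<beta>hat1 \<beta>2 \<noteq> 0 \<longrightarrow> (\<exists>C. \<exists>N. \<forall>n2\<ge>N. \<forall>lam>0.
        aMSE (d \<gamma>2) (glm_v1 b2 n1 X1 \<beta>2) (glm_v2 b2 X2 \<beta>2) (glm_X1Delta h n1 X1 \<beta>hat1 \<beta>2) n1 n2 lam
      \<le> aMSE (d \<gamma>2) (glm_v1 b2 n1 X1 \<beta>2) (glm_v2 b2 X2 \<beta>2) (glm_X1Delta h n1 X1 \<beta>hat1 \<beta>2) n1 n2 0
        \<longrightarrow> lam \<le> C / sqrt (real n2)))"
proof -
  let ?w = "glm_X1Delta h n1 X1 \<beta>hat1 \<beta>2"
  let ?aMSE = "aMSE (d \<gamma>2) (glm_v1 b2 n1 X1 \<beta>2) (glm_v2 b2 X2 \<beta>2) ?w n1"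
  have "\<exists>lam0>0. \<forall>lam. 0 < lam \<and> lam < lam0 \<longrightarrow> ?aMSE n2 lam < ?aMSE n2 0" for n2
    using aMSE_less_aMSE_zero_near_zero[OF C2_v1 C2_v2 d_pos] by metis
  moreover have "?aMSE n2 lam < ?aMSE n2 0" if "?w = 0" "lam > 0" for n2 lam
    using aMSE_less_aMSE_zero_unbiased[OF C2_v1 C2_v2 d_pos] that by simp
  moreover have "\<exists>C N. \<forall>n2\<ge>N. \<forall>lam>0. ?aMSE n2 lam \<le> ?aMSE n2 0 \<longrightarrow> lam \<le> C / sqrt (real n2)"
    if "?w \<noteq> 0"
    using aMSE_le_aMSE_zero_imp_lambda_le[OF C2_v1 C2_v2 d_pos n1_pos that] by metis
  ultimately show ?thesis
    by blast
qed

end
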